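(* Let $I(x)=\int_0^x e^{u^2/2}\operatorname{erf}(u/\sqrt2)\,du$. Then for every real $x\neq0$, \[ I(x)\;\ge\;\ell(x):=\sqrt{\frac{(e^{x^2/2}-1)^3}{x^2e^{x^2/2}}}. \]
   Context: $\operatorname{erf}(z)=\frac{2}{\sqrt\pi}\int_0^z e^{-t^2}dt$. *)

theory Defs
  imports "HOL-Analysis.Analysis"
begin

text \<open>Error function on the reals, erf z = 2/sqrt pi * int_0^z exp(-t^2) dt
  (oriented interval integral, so negative z is handled correctly).\<close>
definition erf :: "real \<Rightarrow> real" where
  "erf z = 2 / sqrt pi * (LBINT t=0..z. exp (- (t^2)))"

definition I_fun :: "real \<Rightarrow> real" where
  "I_fun x = (LBINT u=0..x. exp (u^2 / 2) * erf (u / sqrt 2))"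

definition ell :: "real \<Rightarrow> real" where
  "ell x = sqrt ((exp (x^2/2) - 1) ^ 3 / (x^2 * exp (x^2/2)))"

end

theory Submission
  imports Defs "HOL-Probability.Distributions" "HOL-Real_Asymp.Real_Asymp"
begin

text \<open>Both sides are even and vanish at 0, so it suffices to compare derivatives on \<open>t > 0\<close>.
  Put \<open>H = exp (t^2/2)\<close>. The bound \<open>H \<ge> 1 + t^2/2\<close> gives \<open>ell' t \<le> sqrt (H * (H - 1))\<close>, while
  Polya's inequality \<open>erf y ^ 2 \<ge> 1 - exp (- y^2)\<close> gives
  \<open>I_fun' t = H * erf (t / sqrt 2) \<ge> H * sqrt (1 - 1 / H) = sqrt (H * (H - 1))\<close>.\<close>

lemma has_real_derivative_interval_integral_upper:
  fixes f :: "real \<Rightarrow> real" and c x :: real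
  assumes "continuous_on UNIV f"
  shows "((\<lambda>u. LBINT y=c..u. f y) has_real_derivative f x) (at x)"
proof -
  have "((\<lambda>u. LBINT y=c..u. f y) has_vector_derivative f x) (at x within {min c (x-1)..max c (x+1)})"
    by (rule interval_integral_FTC2) (auto intro: continuous_on_subset[OF assms])
  then have "((\<lambda>u. LBINT y=c..u. f y) has_vector_derivative f x) (at x within {x-1<..<x+1})"
    by (rule has_vector_derivative_within_subset) auto
  moreover have "at x within {x-1<..<x+1} = at x"
    by (rule at_within_open) auto
  ultimately show ?thesis
    by (simp add: has_real_derivative_iff_has_vector_derivative)
qed

lemma erf_has_real_derivative: "(erf has_real_derivative 2 / sqrt pi * exp (- (x^2))) (at x)"
proof -
  have "((\<lambda>z. LBINT t=0..z. exp (- (t^2))) has_real_derivative exp (- (x^2))) (at x)"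
    unfolding zero_ereal_def
    by (rule has_real_derivative_interval_integral_upper) (intro continuous_intros)
  then show ?thesis
    unfolding erf_def[abs_def] by (rule DERIV_cmult)
qed

lemma isCont_erf: "isCont erf x"
  using erf_has_real_derivative DERIV_isCont by blast

lemma erf_0 [simp]: "erf 0 = 0"
  by (simp add: erf_def zero_ereal_def[symmetric])

lemma erf_minus: "erf (- x) = - erf x"
proof -
  have "((\<lambda>y. erf (- y) + erf y) has_real_derivative
      2 / sqrt pi * exp (- ((- s)^2)) * (- 1) + 2 / sqrt pi * exp (- (s^2))) (at s)" for s
    by (intro derivative_intros DERIV_chain2[OF erf_has_real_derivative] erf_has_real_derivative)
  then have "\<forall>s. ((\<lambda>y. erf (- y) + erf y) has_real_derivative 0) (at s)"
    by simp
  from DERIV_isconst_all[OF this, of x 0] show ?thesis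
    by simp
qed

lemma erf_nonneg: "0 \<le> x \<Longrightarrow> 0 \<le> erf x"
  using DERIV_nonneg_imp_nondecreasing[of 0 x erf] erf_has_real_derivative by force

lemma erf_tendsto_1: "(erf \<longlongrightarrow> 1) at_top"
proof -
  have gauss: "has_bochner_integral lborel (\<lambda>t. indicator {0..} t *\<^sub>R exp (- t\<^sup>2)) (sqrt pi / 2)"
    by (rule gaussian_moment_0)
  have integrable: "set_integrable lborel {0..} (\<lambda>t::real. exp (- t\<^sup>2))"
    unfolding set_integrable_def using gauss[unfolded has_bochner_integral_iff] by (rule conjunct1)
  have integral: "(LINT t:{0..}|lborel. exp (- t\<^sup>2)) = sqrt pi / 2"
    unfolding set_lebesgue_integral_def using has_bochner_integral_integral_eq[OF gauss] .
  have "((\<lambda>b. LINT t:{0..b}|lborel. exp (- t\<^sup>2)) \<longlongrightarrow> sqrt pi / 2) at_top"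
    using tendsto_set_lebesgue_integral_at_top[OF _ integrable] integral by simp
  then have "((\<lambda>b. 2 / sqrt pi * (LINT t:{0..b}|lborel. exp (- t\<^sup>2))) \<longlongrightarrow> 1) at_top"
    using tendsto_mult_left[of _ "sqrt pi / 2" at_top "2 / sqrt pi"] by simp
  moreover have "eventually (\<lambda>b. 2 / sqrt pi * (LINT t:{0..b}|lborel. exp (- t\<^sup>2)) = erf b) at_top"
    using eventually_ge_at_top[of 0]
    by eventually_elim (simp add: erf_def zero_ereal_def interval_integral_Icc)
  ultimately show ?thesis
    by (rule Lim_transform_eventually)
qed

lemma concave_on_erf: "concave_on {0..} erf"
  unfolding concave_on_def
proof (rule convex_on_realI)
  show "((\<lambda>x. - erf x) has_real_derivative - (2 / sqrt pi * exp (- (x^2)))) (at x)" for x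
    by (intro DERIV_minus erf_has_real_derivative)
  show "- (2 / sqrt pi * exp (- (x^2))) \<le> - (2 / sqrt pi * exp (- (y^2)))"
    if "x \<in> {0..}" "x \<le> y" for x y :: real
    using that by (auto intro!: divide_right_mono simp: power_mono)
qed auto

lemma erf_secant_le:
  assumes "0 \<le> z" "z \<le> y"
  shows "z * erf y \<le> y * erf z"
proof (cases "y = 0")
  case False
  have "concave_on {0..y} erf"
    unfolding concave_on_def by (rule convex_on_subset[OF concave_on_erf[unfolded concave_on_def]]) auto
  then have "(erf y - erf 0) / (y - 0) * (z - 0) + erf 0 \<le> erf z"
    using assms by (intro concave_onD_Icc') auto
  then show ?thesis
    using False assms by (simp add: field_simps)
qed (use assms in simp)

lemma linear_le_erf_below:
  assumes "0 \<le> s" "s \<le> y" "c * y \<le> erf y"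
  shows "c * s \<le> erf s"
proof (cases "y = 0")
  case False
  have "s * (c * y) \<le> s * erf y"
    using assms by (intro mult_left_mono) auto
  also have "\<dots> \<le> y * erf s"
    using erf_secant_le[OF assms(1,2)] .
  finally show ?thesis
    using False assms by (simp add: field_simps)
qed (use assms in simp)

lemma erf_le_linear_above:
  assumes "0 \<le> y" "y \<le> s" "erf y < c * y"
  shows "erf s \<le> c * s"
proof -
  have "y \<noteq> 0"
    using assms(3) by auto
  have "y * erf s \<le> s * erf y"
    using erf_secant_le[OF assms(1,2)] .
  also have "\<dots> \<le> s * (c * y)"
    using assms by (intro mult_left_mono) auto
  finally show ?thesis
    using \<open>y \<noteq> 0\<close> assms by (simp add: field_simps)
qed

text \<open>Polya's inequality, by an ODE argument instead of polar coordinates: the derivative of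
  \<open>erf s ^ 2 - (1 - exp (- s^2))\<close> has the sign of \<open>erf s - sqrt pi / 2 * s\<close>, which by
  concavity of erf changes sign at most once, from + to -; and the difference vanishes at 0 and
  at infinity.\<close>
lemma erf_power2_ge:
  assumes "0 \<le> y"
  shows "1 - exp (- (y^2)) \<le> erf y ^ 2"
proof -
  let ?E = "\<lambda>s. erf s ^ 2 - (1 - exp (- (s^2)))"
  define E' where "E' s = 4 / sqrt pi * exp (- (s^2)) * (erf s - sqrt pi / 2 * s)" for s
  have E_deriv: "(?E has_real_derivative E' s) (at s)" for s
    unfolding E'_def by (auto intro!: derivative_eq_intros erf_has_real_derivative simp: field_simps)
  show ?thesis
  proof (cases "sqrt pi / 2 * y \<le> erf y")
    case True
    have "?E 0 \<le> ?E y"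
    proof (rule DERIV_nonneg_imp_nondecreasing[OF assms])
      fix s assume "0 \<le> s" "s \<le> y"
      then have "sqrt pi / 2 * s \<le> erf s"
        using True by (rule linear_le_erf_below)
      then have "0 \<le> E' s"
        unfolding E'_def by simp
      then show "\<exists>d. (?E has_real_derivative d) (at s) \<and> 0 \<le> d"
        using E_deriv by blast
    qed
    then show ?thesis by simp
  next
    case False
    have E_decreasing: "?E z \<le> ?E y" if "y \<le> z" for z
    proof (rule DERIV_nonpos_imp_nonincreasing[OF that])
      fix s assume "y \<le> s" "s \<le> z"
      then have "erf s \<le> sqrt pi / 2 * s"
        using False assms by (intro erf_le_linear_above) auto
      then have "E' s \<le> 0"
        unfolding E'_def by (intro mult_nonneg_nonpos) auto
      then show "\<exists>d. (?E has_real_derivative d) (at s) \<and> d \<le> 0"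
        using E_deriv by blast
    qed
    have "((\<lambda>s::real. exp (- (s^2))) \<longlongrightarrow> 0) at_top"
      by real_asymp
    then have "(?E \<longlongrightarrow> 1 ^ 2 - (1 - 0)) at_top"
      by (intro tendsto_intros erf_tendsto_1)
    then have "(?E \<longlongrightarrow> 0) at_top"
      by simp
    moreover have "eventually (\<lambda>z. ?E z \<le> ?E y) at_top"
      using eventually_ge_at_top[of y] by eventually_elim (rule E_decreasing)
    ultimately have "0 \<le> ?E y"
      by (rule tendsto_upperbound) simp
    then show ?thesis by simp
  qed
qed

lemma I_fun_has_real_derivative:
  "(I_fun has_real_derivative exp (x^2 / 2) * erf (x / sqrt 2)) (at x)"
proof -
  have "isCont (\<lambda>u. exp (u^2 / 2) * erf (u / sqrt 2)) u" for u
    by (intro continuous_intros isCont_o2[OF _ isCont_erf]) auto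
  then have "((\<lambda>x. LBINT u=0..ereal x. exp (u^2 / 2) * erf (u / sqrt 2))
      has_real_derivative exp (x^2 / 2) * erf (x / sqrt 2)) (at x)"
    unfolding zero_ereal_def
    by (intro has_real_derivative_interval_integral_upper continuous_at_imp_continuous_on) auto
  then show ?thesis
    unfolding I_fun_def[abs_def] .
qed

lemma I_fun_0 [simp]: "I_fun 0 = 0"
  by (simp add: I_fun_def zero_ereal_def[symmetric])

lemma I_fun_minus: "I_fun (- x) = I_fun x"
proof -
  have "((\<lambda>y. I_fun (- y) - I_fun y) has_real_derivative
      exp ((- s)^2 / 2) * erf (- s / sqrt 2) * (- 1) - exp (s^2 / 2) * erf (s / sqrt 2)) (at s)" for s
    by (intro derivative_intros DERIV_chain2[OF I_fun_has_real_derivative] I_fun_has_real_derivative)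
  then have "\<forall>s. ((\<lambda>y. I_fun (- y) - I_fun y) has_real_derivative 0) (at s)"
    by (simp add: erf_minus[of "s / sqrt 2" for s, simplified])
  from DERIV_isconst_all[OF this, of x 0] show ?thesis
    by simp
qed

lemma ell_minus: "ell (- x) = ell x"
  by (simp add: ell_def)

text \<open>\<open>ell 0 = sqrt (0 / 0)\<close> is 0 only by the convention \<open>x / 0 = 0\<close>; it happens to be the limit at 0.\<close>
lemma ell_0 [simp]: "ell 0 = 0"
  by (simp add: ell_def)

lemma isCont_ell: "isCont ell t"
proof (cases "t = 0")
  case True
  have "((\<lambda>t::real. sqrt ((exp (t^2/2) - 1) ^ 3 / (t^2 * exp (t^2/2)))) \<longlongrightarrow> 0) (at 0)"
    by real_asymp
  then show ?thesis
    using True by (simp add: isCont_def ell_def[abs_def])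
next
  case False
  then show ?thesis
    unfolding ell_def[abs_def] by (intro continuous_intros) auto
qed

lemma ell_has_real_derivative_le:
  assumes "0 < t"
  shows "\<exists>d. (ell has_real_derivative d) (at t) \<and> d \<le> sqrt (exp (t^2/2) * (exp (t^2/2) - 1))"
proof -
  define H where "H = exp (t^2/2)"
  define q :: "real \<Rightarrow> real" where "q s = (exp (s^2/2) - 1) ^ 3 / (s^2 * exp (s^2/2))" for s
  define q' where "q' = (H - 1)^2 * (3*t^2*H - (2 + t^2) * (H - 1)) / (t^3 * H)"
  have "1 + t^2/2 \<le> H"
    unfolding H_def by (rule exp_ge_add_one_self)
  moreover have "0 < t^2"
    using assms by simp
  ultimately have H: "1 < H" "2 + t^2 \<le> 2 * H"
    by linarith+
  have num: "((\<lambda>s. (exp (s^2/2) - 1) ^ 3) has_real_derivative 3 * (H - 1)^2 * (t * H)) (at t)"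
    unfolding H_def by (auto intro!: derivative_eq_intros)
  have den: "((\<lambda>s. s^2 * exp (s^2/2)) has_real_derivative 2 * t * H + t^2 * (t * H)) (at t)"
    unfolding H_def by (auto intro!: derivative_eq_intros)
  have "(3 * (H - 1)^2 * (t * H) * (t^2 * H) - (H - 1)^3 * (2 * t * H + t^2 * (t * H))) / (t^2 * H * (t^2 * H)) = q'"
    unfolding q'_def using assms H by (simp add: field_simps power2_eq_square power3_eq_cube)
  then have q_deriv: "(q has_real_derivative q') (at t)"
    unfolding q_def[abs_def] using DERIV_divide[OF num den] assms by (simp add: H_def)
  have q_pos: "0 < q t"
    using assms H by (simp add: q_def H_def[symmetric])
  have "ell = (\<lambda>s. sqrt (q s))"
    by (simp add: fun_eq_iff ell_def q_def)
  then have ell_deriv: "(ell has_real_derivative inverse (sqrt (q t)) / 2 * q') (at t)"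
    using DERIV_chain2[OF DERIV_real_sqrt[OF q_pos] q_deriv] by simp
  have "sqrt (q t) * sqrt (H * (H - 1)) = sqrt (((H - 1)^2 / t)^2)"
    unfolding real_sqrt_mult[symmetric] q_def H_def[symmetric]
    using assms H by (simp add: field_simps power2_eq_square power3_eq_cube)
  also have "\<dots> = (H - 1)^2 / t"
    using assms by simp
  finally have sqrt_q: "sqrt (q t) * sqrt (H * (H - 1)) = (H - 1)^2 / t" .
  have "q' \<le> (H - 1)^2 * (2*t^2*H) / (t^3 * H)"
    unfolding q'_def using assms H by (intro divide_right_mono mult_left_mono) (auto simp: algebra_simps)
  also have "\<dots> = 2 * ((H - 1)^2 / t)"
    using assms H by (simp add: field_simps power2_eq_square power3_eq_cube)
  finally have "q' \<le> 2 * (sqrt (q t) * sqrt (H * (H - 1)))"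
    unfolding sqrt_q .
  then have "inverse (sqrt (q t)) / 2 * q' \<le> sqrt (H * (H - 1))"
    using q_pos by (simp add: field_simps)
  with ell_deriv show ?thesis
    unfolding H_def by blast
qed

lemma sqrt_le_exp_mult_erf:
  assumes "0 \<le> t"
  shows "sqrt (exp (t^2/2) * (exp (t^2/2) - 1)) \<le> exp (t^2/2) * erf (t / sqrt 2)"
proof -
  have "exp (t^2/2) * (exp (t^2/2) - 1) = exp (t^2/2)^2 * (1 - exp (- ((t / sqrt 2)^2)))"
    by (simp add: power_divide exp_minus field_simps power2_eq_square)
  also have "\<dots> \<le> exp (t^2/2)^2 * erf (t / sqrt 2)^2"
    using assms by (intro mult_left_mono erf_power2_ge) auto
  finally have "sqrt (exp (t^2/2) * (exp (t^2/2) - 1)) \<le> sqrt ((exp (t^2/2) * erf (t / sqrt 2))^2)"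
    by (simp add: power_mult_distrib)
  also have "\<dots> = exp (t^2/2) * erf (t / sqrt 2)"
    using assms erf_nonneg[of "t / sqrt 2"] by simp
  finally show ?thesis .
qed

lemma ell_le_I_fun:
  assumes "0 \<le> x"
  shows "ell x \<le> I_fun x"
proof -
  have "I_fun 0 - ell 0 \<le> I_fun x - ell x"
  proof (rule DERIV_nonneg_imp_increasing_open[OF assms])
    fix t :: real assume "0 < t"
    then obtain d where "(ell has_real_derivative d) (at t)"
        and "d \<le> exp (t^2 / 2) * erf (t / sqrt 2)"
      using ell_has_real_derivative_le sqrt_le_exp_mult_erf by (meson less_imp_le order_trans)
    then show "\<exists>D. ((\<lambda>t. I_fun t - ell t) has_real_derivative D) (at t) \<and> 0 \<le> D"
      using DERIV_diff[OF I_fun_has_real_derivative] by force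
  next
    have "isCont I_fun t" for t
      using I_fun_has_real_derivative DERIV_isCont by blast
    then show "continuous_on {0..x} (\<lambda>t. I_fun t - ell t)"
      by (intro continuous_at_imp_continuous_on ballI continuous_intros isCont_ell)
  qed
  then show ?thesis
    by simp
qed

theorem lemma8:
  fixes x :: real
  assumes "x \<noteq> 0"
  shows "I_fun x \<ge> ell x"
proof (cases "0 \<le> x")
  case True
  then show ?thesis by (rule ell_le_I_fun)
next
  case False
  then have "ell (- x) \<le> I_fun (- x)"
    by (intro ell_le_I_fun) simp
  then show ?thesis
    by (simp add: I_fun_minus ell_minus)
qed

end
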